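(* Let $\mathbb{T}$ be a regular torus of type S or type L of the regularized planar two-center problem, with rotation number $W$, and let $\gamma$ be an orbit on $\mathbb{T}$ which, for all times, stays at a positive distance (with respect to the flat metric in the angle coordinates) from the set of collision points. Then $W$ is rational.
   Context: Fix $d>0$ and masses $m_1,m_2>0$ at $(-d,0)$ and $(d,0)$. A test particle moves with Hamiltonian $H=\tfrac12(p_x^2+p_y^2)-m_1/\sqrt{(x+d)^2+y^2}-m_2/\sqrt{(x-d)^2+y^2}$; energies $h<0$. Regularization: $(\lambda,\nu)\in\mathbb{R}\times(\mathbb{R}/2\pi\mathbb{Z})$ with $x+iy=d\sin(\nu+i\lambda)$ (a double cover branched over the centers), conjugate momenta $p_\lambda,p_\nu$, time change $dt=d^2(\cosh^2\lambda-\sin^2\nu)\,d\tau$. On $H=h$ the motion becomes the flow (time $\tau$) of $H_\lambda+H_\nu$ on its zero level, $H_\lambda=\tfrac12p_\lambda^2-d(m_1+m_2)\cosh\lambda-hd^2\cosh^2\lambda$, $H_\nu=\tfrac12p_\nu^2+d(m_1-m_2)\sin\nu+hd^2\sin^2\nu$; orbits lie in sets $\{H_\lambda=-g,\ H_\nu=g\}$ for a separation constant $g$. Regular torus: a compact connected component $\mathbb{T}=C_\lambda\times C_\nu$ of such a set with $-g$ a regular value of $H_\lambda$ and $g$ a regular value of $H_\nu$ ($C_\lambda$ a closed curve in the $(\lambda,p_\lambda)$-plane, $C_\nu$ a closed curve in the cylinder $(\mathbb{R}/2\pi\mathbb{Z})\times\mathbb{R}$). Type S: $C_\nu$ contractible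 in the cylinder; type L: $C_\nu$ winds around the cylinder and $C_\lambda$ meets $\{\lambda=0\}$. Rotation number $W=T_\nu/T_\lambda$, where $T_\lambda,T_\nu$ are the $\tau$-periods of the motions on $C_\lambda,C_\nu$; in angle coordinates $\theta_1$ along $C_\nu$, $\theta_2$ along $C_\lambda$ (each in $\mathbb{R}/\mathbb{Z}$, increasing uniformly in $\tau$ with period 1) orbits on $\mathbb{T}$ lift to lines $\theta_2=W\theta_1+\mathrm{const}$. Collision points are the points of $\mathbb{T}$ with $\lambda=0$ and $\nu\equiv\pm\pi/2\pmod{2\pi}$ (they project to the two centers). *)

theory Defs
  imports "HOL-Analysis.Analysis"
begin

text \<open>Separated regularized Hamiltonians of the planar two-center problem
  (parameters d, m1, m2, energy h; coordinates (lambda, p_lambda) resp. (nu, p_nu)).\<close>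

definition Hlam :: "real \<Rightarrow> real \<Rightarrow> real \<Rightarrow> real \<Rightarrow> real \<Rightarrow> real \<Rightarrow> real" where
  "Hlam d m1 m2 h l p = p\<^sup>2 / 2 - d * (m1 + m2) * cosh l - h * d\<^sup>2 * (cosh l)\<^sup>2"

definition Hnu :: "real \<Rightarrow> real \<Rightarrow> real \<Rightarrow> real \<Rightarrow> real \<Rightarrow> real \<Rightarrow> real" where
  "Hnu d m1 m2 h n p = p\<^sup>2 / 2 + d * (m1 - m2) * sin n + h * d\<^sup>2 * (sin n)\<^sup>2"

definition regular_value :: "(real \<Rightarrow> real \<Rightarrow> real) \<Rightarrow> real \<Rightarrow> bool" where
  "regular_value H c \<longleftrightarrow>
     (\<forall>q p. H q p = c \<longrightarrow>
        (deriv (\<lambda>q'. H q' p) q, deriv (\<lambda>p'. H q p') p) \<noteq> (0, 0))"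

definition hamiltonian_solution :: "(real \<Rightarrow> real \<Rightarrow> real) \<Rightarrow> (real \<Rightarrow> real \<times> real) \<Rightarrow> bool" where
  "hamiltonian_solution H z \<longleftrightarrow>
     (\<forall>t. ((\<lambda>s. fst (z s)) has_real_derivative
              deriv (\<lambda>p. H (fst (z t)) p) (snd (z t))) (at t) \<and>
          ((\<lambda>s. snd (z s)) has_real_derivative
              - deriv (\<lambda>q. H q (snd (z t))) (fst (z t))) (at t))"

text \<open>The cylinder (R/2piZ) x R, realised as {(w,p). |w| = 1} via nu \<mapsto> cis nu.\<close>
definition cyl_proj :: "real \<times> real \<Rightarrow> complex \<times> real" where
  "cyl_proj z = (cis (fst z), snd z)"

definition cylinder :: "(complex \<times> real) set" where
  "cylinder = range cyl_proj"

definition contractible_in :: "'a::topological_space set \<Rightarrow> 'a set \<Rightarrow> bool" where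
  "contractible_in C X \<longleftrightarrow> (\<exists>c. homotopic_with_canon (\<lambda>f. True) C X id (\<lambda>x. c))"

definition minimal_period :: "(real \<Rightarrow> 'a) \<Rightarrow> real \<Rightarrow> bool" where
  "minimal_period f T \<longleftrightarrow> T > 0 \<and> (\<forall>t. f (t + T) = f t) \<and>
     (\<forall>S. 0 < S \<and> S < T \<longrightarrow> \<not> (\<forall>t. f (t + S) = f t))"

definition flat_torus_dist :: "real \<times> real \<Rightarrow> real \<times> real \<Rightarrow> real" where
  "flat_torus_dist u v = (INF k \<in> (\<int> \<times> \<int>). dist u (v + k))"

definition collision_nu :: "real \<Rightarrow> bool" where
  "collision_nu n \<longleftrightarrow> (\<exists>k::int. n = pi/2 + 2 * of_int k * pi \<or> n = - pi/2 + 2 * of_int k * pi)"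

end

theory Submission
  imports Defs
begin

text \<open>Both separated systems are one-degree-of-freedom mechanical systems \<open>q'' = -U'(q)\<close>. A periodic
  solution on a regular energy level sweeps out its whole connected component, so every orbit on
  the torus is a time shift of the reference orbit \<open>(x, y)\<close> and lifts to a line of slope \<open>W\<close> in the
  angle coordinates. The \<open>\<nu>\<close>-motion always reaches \<open>\<nu> = \<plusminus>\<pi>/2\<close>: otherwise it would oscillate
  inside one strip between two zeros of \<open>cos\<close>, where the turning-point signs of \<open>U'\<close> contradict the
  monotonicity of \<open>sin\<close>. The \<open>\<lambda>\<close>-motion reaches \<open>\<lambda> = 0\<close>: for type L by definition, and for
  type S because an orbit avoiding \<open>\<lambda> = 0\<close> forces an energy range in which \<open>p\<^sub>\<nu>\<close> never
  vanishes, so the \<open>\<nu>\<close>-curve winds around the cylinder. Hence the torus contains collision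
  points, and if \<open>W\<close> were irrational, Kronecker's theorem would make every line come arbitrarily
  close to them.\<close>

section \<open>Real functions of one variable\<close>

lemma IVT_between:
  fixes f :: "real \<Rightarrow> real"
  assumes "\<And>t. isCont f t" and "f a \<le> y" and "y \<le> f b"
  shows "\<exists>t. min a b \<le> t \<and> t \<le> max a b \<and> f t = y"
proof (cases "a \<le> b")
  case True
  then show ?thesis using IVT[of f a y b] assms by auto
next
  case False
  then show ?thesis using IVT2[of f a y b] assms by auto
qed

lemma sgn_constant_if_nonzero:
  fixes f :: "real \<Rightarrow> real"
  assumes cont: "\<And>t. isCont f t" and nz: "\<And>t. f t \<noteq> 0"
  shows "sgn (f t) = sgn (f s)"
proof -
  have no_sign_change: "\<not> (f a < 0 \<and> 0 < f b)" for a b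
    using IVT_between[OF cont, of a 0 b] nz by force
  show ?thesis
    using no_sign_change[of t s] no_sign_change[of s t] nz[of t] nz[of s]
    by (auto simp: sgn_if)
qed

lemma DERIV_nonzero_crossing:
  fixes f :: "real \<Rightarrow> real"
  assumes der: "(f has_real_derivative D) (at x)" and "D \<noteq> 0" and "\<eta> > 0"
  obtains a b where "\<bar>a - x\<bar> < \<eta>" "\<bar>b - x\<bar> < \<eta>" "f a < f x" "f x < f b"
proof (cases "D > 0")
  case True
  obtain d1 where "d1 > 0" and right: "\<And>h. 0 < h \<Longrightarrow> h < d1 \<Longrightarrow> f x < f (x + h)"
    using DERIV_pos_inc_right[OF der True] by blast
  obtain d2 where "d2 > 0" and left: "\<And>h. 0 < h \<Longrightarrow> h < d2 \<Longrightarrow> f (x - h) < f x"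
    using DERIV_pos_inc_left[OF der True] by blast
  define h where "h = min \<eta> (min d1 d2) / 2"
  have "0 < h" "h < \<eta>" "h < d1" "h < d2"
    using \<open>d1 > 0\<close> \<open>d2 > 0\<close> \<open>\<eta> > 0\<close> by (auto simp: h_def)
  then show ?thesis using that[of "x - h" "x + h"] left right by auto
next
  case False
  then have "D < 0" using \<open>D \<noteq> 0\<close> by simp
  obtain d1 where "d1 > 0" and right: "\<And>h. 0 < h \<Longrightarrow> h < d1 \<Longrightarrow> f (x + h) < f x"
    using DERIV_neg_dec_right[OF der \<open>D < 0\<close>] by blast
  obtain d2 where "d2 > 0" and left: "\<And>h. 0 < h \<Longrightarrow> h < d2 \<Longrightarrow> f x < f (x - h)"
    using DERIV_neg_dec_left[OF der \<open>D < 0\<close>] by blast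
  define h where "h = min \<eta> (min d1 d2) / 2"
  have "0 < h" "h < \<eta>" "h < d1" "h < d2"
    using \<open>d1 > 0\<close> \<open>d2 > 0\<close> \<open>\<eta> > 0\<close> by (auto simp: h_def)
  then show ?thesis using that[of "x + h" "x - h"] left right by auto
qed

lemma decreases_after_critical_point:
  fixes f g :: "real \<Rightarrow> real"
  assumes f': "\<And>t. (f has_real_derivative g t) (at t)"
    and g': "(g has_real_derivative D) (at s)" and "g s = 0" and "D < 0"
  shows "\<exists>t. f t < f s"
proof -
  obtain d where "d > 0" and g_neg: "\<And>h. 0 < h \<Longrightarrow> h < d \<Longrightarrow> g (s + h) < g s"
    using DERIV_neg_dec_right[OF g' \<open>D < 0\<close>] by blast
  obtain c where c: "s < c" "c < s + d / 2" "f (s + d / 2) - f s = (s + d / 2 - s) * g c"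
    using MVT2[of s "s + d / 2" f g] f' \<open>d > 0\<close> by auto
  have "g c < 0" using g_neg[of "c - s"] c \<open>g s = 0\<close> by auto
  then have "(s + d / 2 - s) * g c < 0" using \<open>d > 0\<close> by (simp add: mult_pos_neg)
  then have "f (s + d / 2) < f s" using c(3) by linarith
  then show ?thesis by blast
qed

lemma vanishes_if_deriv_le_multiple:
  fixes u u' :: "real \<Rightarrow> real"
  assumes u': "\<And>r. (u has_real_derivative u' r) (at r)"
    and bound: "\<And>r. s \<le> r \<Longrightarrow> r \<le> t \<Longrightarrow> u' r \<le> K * u r"
    and "u s = 0" and nonneg: "\<And>r. 0 \<le> u r" and "s \<le> t"
  shows "u t = 0"
proof -
  define w where "w r = u r * exp (- K * r)" for r
  have "w t \<le> w s"
  proof (rule DERIV_nonpos_imp_nonincreasing[OF \<open>s \<le> t\<close>])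
    fix r assume "s \<le> r" "r \<le> t"
    have "(w has_real_derivative (u' r - K * u r) * exp (- K * r)) (at r)"
      unfolding w_def by (auto intro!: derivative_eq_intros u' simp: algebra_simps)
    moreover have "(u' r - K * u r) * exp (- K * r) \<le> 0"
      using bound[OF \<open>s \<le> r\<close> \<open>r \<le> t\<close>] by (simp add: mult_nonpos_nonneg)
    ultimately show "\<exists>y. (w has_real_derivative y) (at r) \<and> y \<le> 0" by blast
  qed
  then have "u t * exp (- K * t) \<le> 0" using \<open>u s = 0\<close> by (simp add: w_def)
  then show ?thesis using nonneg[of t] by (simp add: mult_le_0_iff)
qed

lemma vanishes_if_abs_deriv_le_multiple:
  fixes u u' :: "real \<Rightarrow> real"
  assumes u': "\<And>r. (u has_real_derivative u' r) (at r)"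
    and bound: "\<And>r. min s t \<le> r \<Longrightarrow> r \<le> max s t \<Longrightarrow> \<bar>u' r\<bar> \<le> K * u r"
    and "u s = 0" and nonneg: "\<And>r. 0 \<le> u r"
  shows "u t = 0"
proof (cases "s \<le> t")
  case True
  show ?thesis
    by (rule vanishes_if_deriv_le_multiple[where K = K, OF u' _ \<open>u s = 0\<close> nonneg True])
      (use bound True in force)
next
  case False
  define v where "v r = u (- r)" for r
  have "v (- t) = 0"
  proof (rule vanishes_if_deriv_le_multiple[where u = v and u' = "\<lambda>r. - u' (- r)" and s = "- s" and t = "- t"])
    show "(v has_real_derivative - u' (- r)) (at r)" for r
      unfolding v_def using DERIV_chain2[OF u' DERIV_minus[OF DERIV_ident]] by simp
    show "- u' (- r) \<le> K * v r" if "- s \<le> r" "r \<le> - t" for r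
      using bound[of "- r"] that False by (force simp: v_def)
  qed (use \<open>u s = 0\<close> nonneg False in \<open>auto simp: v_def\<close>)
  then show ?thesis by (simp add: v_def)
qed

lemma abs_cross_terms_le:
  fixes a b e L :: real
  assumes "\<bar>e\<bar> \<le> L * \<bar>a\<bar>" and "L \<ge> 0"
  shows "\<bar>2 * a * b + 2 * b * e\<bar> \<le> (1 + L) * (a\<^sup>2 + b\<^sup>2)"
proof -
  have ab: "2 * \<bar>a\<bar> * \<bar>b\<bar> \<le> a\<^sup>2 + b\<^sup>2" using sum_squares_bound[of "\<bar>a\<bar>" "\<bar>b\<bar>"] by simp
  have "\<bar>e\<bar> * \<bar>b\<bar> \<le> (L * \<bar>a\<bar>) * \<bar>b\<bar>" using assms(1) by (rule mult_right_mono) simp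
  moreover have "\<bar>2 * b * e\<bar> = 2 * (\<bar>e\<bar> * \<bar>b\<bar>)" by (simp add: abs_mult)
  ultimately have "\<bar>2 * b * e\<bar> \<le> L * (2 * \<bar>a\<bar> * \<bar>b\<bar>)" by simp
  also have "\<dots> \<le> L * (a\<^sup>2 + b\<^sup>2)" using ab \<open>L \<ge> 0\<close> by (rule mult_left_mono)
  finally have "\<bar>2 * b * e\<bar> \<le> L * (a\<^sup>2 + b\<^sup>2)" .
  moreover have "\<bar>2 * a * b\<bar> \<le> a\<^sup>2 + b\<^sup>2" using ab by (simp add: abs_mult)
  moreover have "\<bar>2 * a * b + 2 * b * e\<bar> \<le> \<bar>2 * a * b\<bar> + \<bar>2 * b * e\<bar>" by (rule abs_triangle_ineq)
  ultimately show ?thesis by (simp add: distrib_right)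
qed

lemma periodic_int_multiple:
  fixes f :: "real \<Rightarrow> 'a"
  assumes per: "\<And>t. f (t + T) = f t"
  shows "f (t + of_int n * T) = f t"
proof (induction n arbitrary: t rule: int_induct[where k = 0])
  case base
  then show ?case by simp
next
  case (step1 i)
  have "f (t + of_int (i + 1) * T) = f ((t + T) + of_int i * T)" by (simp add: algebra_simps)
  then show ?case using step1(2) per by simp
next
  case (step2 i)
  have "f (t + of_int i * T) = f ((t + of_int (i - 1) * T) + T)" by (simp add: algebra_simps)
  then show ?case using step2(2) per by simp
qed

lemma periodic_2pi_multiple:
  fixes f :: "real \<Rightarrow> 'a"
  assumes "\<And>t. f (t + 2 * pi) = f t"
  shows "f (t + 2 * pi * of_int k) = f t"
  using periodic_int_multiple[where f = f, OF assms, of t k] by (metis mult.commute)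

lemma periodic_range:
  fixes f :: "real \<Rightarrow> 'a"
  assumes "T > 0" and per: "\<And>t. f (t + T) = f t"
  shows "range f = f ` {0..T}"
proof -
  have "f t \<in> f ` {0..T}" for t
  proof -
    define n where "n = \<lfloor>t / T\<rfloor>"
    have "of_int n * T \<le> t" "t < (of_int n + 1) * T"
      using \<open>T > 0\<close> floor_divide_lower[of T t] floor_divide_upper[of T t] by (auto simp: n_def)
    then have "t - of_int n * T \<in> {0..T}" by (auto simp: algebra_simps)
    moreover have "f (t - of_int n * T) = f t"
      using periodic_int_multiple[where f = f and T = T, OF per, of "t - of_int n * T" n] by simp
    ultimately show ?thesis by (metis image_eqI)
  qed
  then show ?thesis by blast
qed

lemma periodic_attains_min_max:
  fixes f :: "real \<Rightarrow> real"
  assumes "T > 0" and per: "\<And>t. f (t + T) = f t" and cont: "\<And>t. isCont f t"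
  obtains a b where "\<And>t. f a \<le> f t \<and> f t \<le> f b"
proof -
  have cont_on: "continuous_on {0..T} f" by (simp add: cont continuous_at_imp_continuous_on)
  obtain a where "a \<in> {0..T}" and "\<forall>s\<in>{0..T}. f a \<le> f s"
    using continuous_attains_inf[OF compact_Icc _ cont_on] \<open>T > 0\<close> by auto
  moreover obtain b where "b \<in> {0..T}" and "\<forall>s\<in>{0..T}. f s \<le> f b"
    using continuous_attains_sup[OF compact_Icc _ cont_on] \<open>T > 0\<close> by auto
  moreover have "\<exists>s\<in>{0..T}. f t = f s" for t
    using periodic_range[where f = f, OF \<open>T > 0\<close> per] by (metis UNIV_I image_iff)
  ultimately show ?thesis using that[of a b] by metis
qed

lemma connected_subset_if_closed_and_locally_absorbing:
  fixes C R :: "'a::metric_space set"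
  assumes "connected C" and "closed R" and "C \<inter> R \<noteq> {}"
    and absorb: "\<And>x. x \<in> C \<inter> R \<Longrightarrow> \<exists>e>0. \<forall>y\<in>C. dist y x < e \<longrightarrow> y \<in> R"
  shows "C \<subseteq> R"
proof -
  have "openin (top_of_set C) (C \<inter> R)"
    unfolding openin_euclidean_subtopology_iff using absorb by blast
  moreover have "closedin (top_of_set C) (C \<inter> R)"
    using \<open>closed R\<close> closedin_closed_Int by blast
  ultimately show ?thesis
    using \<open>connected C\<close> \<open>C \<inter> R \<noteq> {}\<close> unfolding connected_clopen by blast
qed

section \<open>The circle and the cylinder\<close>

lemma cis_eq_iff_int: "cis a = cis b \<longleftrightarrow> (\<exists>k::int. a = b + 2 * pi * of_int k)"
proof
  assume "cis a = cis b"
  then have "exp (\<i> * complex_of_real a) = exp (\<i> * complex_of_real b)" by (simp add: cis_conv_exp)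
  then obtain n :: int where "\<i> * complex_of_real a = \<i> * complex_of_real b + (of_int (2 * n) * pi) * \<i>"
    using exp_eq by blast
  then have "a = b + 2 * pi * of_int n" by (simp add: complex_eq_iff)
  then show "\<exists>k::int. a = b + 2 * pi * of_int k" by blast
next
  assume "\<exists>k::int. a = b + 2 * pi * of_int k"
  then show "cis a = cis b" by (auto simp: cis.ctr complex_eq_iff sin_add cos_add)
qed

lemma cis_eq_imp_eq_if_close:
  assumes "cis a = cis b" and "\<bar>a - b\<bar> < 2 * pi"
  shows "a = b"
proof -
  obtain k :: int where k: "a = b + 2 * pi * of_int k" using assms(1) by (auto simp: cis_eq_iff_int)
  have "k = 0"
  proof (rule ccontr)
    assume "k \<noteq> 0"
    then have "(1::real) \<le> \<bar>of_int k\<bar>" by linarith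
    then have "2 * pi * 1 \<le> 2 * pi * \<bar>of_int k\<bar>" by (intro mult_left_mono) auto
    then show False using assms(2) k by (simp add: abs_mult)
  qed
  then show ?thesis using k by simp
qed

lemma cyl_proj_eq_iff:
  "cyl_proj v = cyl_proj w \<longleftrightarrow> (\<exists>k::int. fst v = fst w + 2 * pi * of_int k \<and> snd v = snd w)"
  by (auto simp: cyl_proj_def cis_eq_iff_int)

lemma cyl_proj_shift: "cyl_proj (a + 2 * pi * of_int k, b) = cyl_proj (a, b)"
  by (auto simp: cyl_proj_eq_iff)

lemma continuous_on_cyl_proj: "continuous_on S cyl_proj"
  unfolding cyl_proj_def by (intro continuous_intros)

text \<open>Near a point of the circle, \<^term>\<open>Ln\<close> is a continuous branch of the angle.\<close>

lemma cis_close_imp_angle_close: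
  assumes "r > 0"
  obtains \<delta> where "\<delta> > 0"
    "\<And>a b. cmod (cis a - cis b) < \<delta> \<Longrightarrow> \<exists>k::int. \<bar>a + 2 * pi * of_int k - b\<bar> < r"
proof -
  have "isCont Ln 1" by (rule isCont_Ln') (auto simp: complex_nonpos_Reals_iff)
  then obtain \<delta> where "\<delta> > 0" and \<delta>: "\<And>z. dist z 1 < \<delta> \<Longrightarrow> dist (Ln z) (Ln 1) < r"
    using \<open>r > 0\<close> unfolding continuous_at_eps_delta by blast
  have "\<exists>k::int. \<bar>a + 2 * pi * of_int k - b\<bar> < r" if "cmod (cis a - cis b) < \<delta>" for a b
  proof -
    define z where "z = cis (a - b)"
    have "z - 1 = (cis a - cis b) / cis b" by (simp add: z_def cis_divide[symmetric] field_simps)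
    then have "dist z 1 < \<delta>" using that by (simp add: dist_norm norm_divide)
    then have small: "cmod (Ln z) < r" using \<delta> by (simp add: dist_norm)
    have "z \<noteq> 0" by (simp add: z_def)
    then have "Re (Ln z) = 0" by (simp add: z_def)
    then have "Ln z = \<i> * complex_of_real (Im (Ln z))" by (simp add: complex_eq_iff)
    then have "cis (Im (Ln z)) = z" using exp_Ln[OF \<open>z \<noteq> 0\<close>] by (metis cis_conv_exp)
    then obtain k :: int where "Im (Ln z) = (a - b) + 2 * pi * of_int k"
      by (auto simp: z_def cis_eq_iff_int)
    moreover have "\<bar>Im (Ln z)\<bar> < r" using small abs_Im_le_cmod[of "Ln z"] by linarith
    ultimately show ?thesis by (intro exI[of _ k]) (simp add: algebra_simps)
  qed
  with \<open>\<delta> > 0\<close> show ?thesis using that by blast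
qed

lemma cyl_proj_locally_liftable:
  assumes "r > 0"
  obtains \<delta> where "\<delta> > 0"
    "\<And>v w. dist (cyl_proj v) (cyl_proj w) < \<delta> \<Longrightarrow>
       \<exists>k::int. dist (fst v + 2 * pi * of_int k, snd v) w < r"
proof -
  obtain \<delta> where "\<delta> > 0" and \<delta>:
    "\<And>a b. cmod (cis a - cis b) < \<delta> \<Longrightarrow> \<exists>k::int. \<bar>a + 2 * pi * of_int k - b\<bar> < r / 2"
    using cis_close_imp_angle_close[of "r / 2"] \<open>r > 0\<close> by auto
  have "\<exists>k::int. dist (fst v + 2 * pi * of_int k, snd v) w < r"
    if close: "dist (cyl_proj v) (cyl_proj w) < min \<delta> (r / 2)" for v w
  proof -
    have "cmod (cis (fst v) - cis (fst w)) < \<delta>"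
      using dist_fst_le[of "cyl_proj v" "cyl_proj w"] close by (simp add: cyl_proj_def dist_norm)
    then obtain k :: int where k: "\<bar>fst v + 2 * pi * of_int k - fst w\<bar> < r / 2" using \<delta> by blast
    have "\<bar>snd v - snd w\<bar> < r / 2"
      using dist_snd_le[of "cyl_proj v" "cyl_proj w"] close by (simp add: cyl_proj_def dist_real_def)
    moreover have "dist (fst v + 2 * pi * of_int k, snd v) w
        \<le> \<bar>fst v + 2 * pi * of_int k - fst w\<bar> + \<bar>snd v - snd w\<bar>"
      using sqrt_sum_squares_le_sum_abs
      by (simp add: dist_Pair_Pair[of _ _ "fst w" "snd w", simplified] dist_real_def)
    ultimately show ?thesis using k by (intro exI[of _ k]) linarith
  qed
  then show ?thesis using that[of "min \<delta> (r / 2)"] \<open>\<delta> > 0\<close> \<open>r > 0\<close> by auto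
qed

lemma cis_surj_if_winding:
  fixes f :: "real \<Rightarrow> real"
  assumes cont: "\<And>t. isCont f t" and winds: "f T = f 0 + 2 * pi * of_int k" and "k \<noteq> 0"
    and "cmod w = 1"
  shows "\<exists>t. cis (f t) = w"
proof -
  define \<theta> where "\<theta> = Arg w"
  have "w \<noteq> 0" using \<open>cmod w = 1\<close> by auto
  then have "cis \<theta> = w" using cis_Arg[of w] \<open>cmod w = 1\<close> by (simp add: \<theta>_def sgn_div_norm)
  define m where "m = \<lceil>(f 0 - \<theta>) / (2 * pi)\<rceil>"
  have "(f 0 - \<theta>) / (2 * pi) \<le> of_int m" "of_int m < (f 0 - \<theta>) / (2 * pi) + 1"
    unfolding m_def by linarith+
  then have "f 0 - \<theta> \<le> of_int m * (2 * pi)" "of_int m * (2 * pi) < f 0 - \<theta> + 2 * pi"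
    using pi_gt_zero by (simp_all add: pos_divide_le_eq pos_less_divide_eq field_simps)
  then have "f 0 \<le> \<theta> + 2 * pi * of_int m" "\<theta> + 2 * pi * of_int m < f 0 + 2 * pi"
    by (simp_all add: algebra_simps)
  then obtain n :: int where n: "min (f 0) (f T) \<le> \<theta> + 2 * pi * of_int n"
    "\<theta> + 2 * pi * of_int n \<le> max (f 0) (f T)"
  proof (cases "k > 0")
    case True
    then have "f 0 + 2 * pi \<le> f T" using winds by simp
    then show ?thesis using that[of m] \<open>f 0 \<le> \<theta> + 2 * pi * of_int m\<close> \<open>\<theta> + 2 * pi * of_int m < f 0 + 2 * pi\<close>
      by simp
  next
    case False
    then have "k \<le> -1" using \<open>k \<noteq> 0\<close> by simp
    then have "2 * pi * of_int k \<le> 2 * pi * (-1)" by (intro mult_left_mono) auto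
    then have "f T \<le> f 0 - 2 * pi" using winds by simp
    then show ?thesis using that[of "m - 1"] \<open>f 0 \<le> \<theta> + 2 * pi * of_int m\<close> \<open>\<theta> + 2 * pi * of_int m < f 0 + 2 * pi\<close>
      by (simp add: algebra_simps)
  qed
  then obtain t where "f t = \<theta> + 2 * pi * of_int n"
    using IVT_between[OF cont, of "if f 0 \<le> f T then 0 else T" _ "if f 0 \<le> f T then T else 0"]
    by (cases "f 0 \<le> f T") (auto simp: min_def max_def)
  then have "cis (f t) = cis \<theta>" by (simp add: cis_eq_iff_int)
  then show ?thesis using \<open>cis \<theta> = w\<close> by blast
qed

text \<open>A continuous section of the projection \<^term>\<open>fst\<close> over the circle would make the circle
  contractible.\<close>

lemma not_contractible_in_if_circle_section:
  fixes \<psi> :: "complex \<Rightarrow> complex \<times> 'b::topological_space"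
  assumes "continuous_on (sphere 0 1) \<psi>" and "\<psi> ` sphere 0 1 \<subseteq> C"
    and fst_\<psi>: "\<And>w. fst (\<psi> w) = w" and "fst ` X \<subseteq> sphere 0 1"
  shows "\<not> contractible_in C X"
proof
  assume "contractible_in C X"
  then obtain c where "homotopic_with_canon (\<lambda>f. True) C X id (\<lambda>x. c)"
    unfolding contractible_in_def by blast
  then have "homotopic_with_canon (\<lambda>f. True) (\<psi> ` sphere 0 1) X id (\<lambda>x. c)"
    using homotopic_with_subset_left assms(2) by blast
  then have "homotopic_with_canon (\<lambda>f. True) (\<psi> ` sphere 0 1) (sphere 0 1) (fst \<circ> id) (fst \<circ> (\<lambda>x. c))"
    by (rule homotopic_with_compose_continuous_left) (use assms(4) in \<open>auto intro: continuous_intros\<close>)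
  then have "homotopic_with_canon (\<lambda>f. True) (sphere 0 1) (sphere 0 1)
      (fst \<circ> id \<circ> \<psi>) (fst \<circ> (\<lambda>x. c) \<circ> \<psi>)"
    by (rule homotopic_with_compose_continuous_right) (use assms(1) in auto)
  moreover have "fst \<circ> id \<circ> \<psi> = id" "fst \<circ> (\<lambda>x. c) \<circ> \<psi> = (\<lambda>x. fst c)"
    using fst_\<psi> by auto
  ultimately have "contractible (sphere (0::complex) 1)" unfolding contractible_def by auto
  then show False using contractible_sphere[of "0::complex" 1] by simp
qed

section \<open>One-degree-of-freedom mechanical systems\<close>

locale mechanical_system =
  fixes U U' U'' :: "real \<Rightarrow> real"
  assumes U_deriv: "\<And>q. (U has_real_derivative U' q) (at q)"
    and U'_deriv: "\<And>q. (U' has_real_derivative U'' q) (at q)"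
    and U''_cont: "\<And>q. isCont U'' q"
begin

definition energy :: "real \<times> real \<Rightarrow> real" where
  "energy w = (snd w)\<^sup>2 / 2 + U (fst w)"

definition solution :: "(real \<Rightarrow> real \<times> real) \<Rightarrow> bool" where
  "solution z \<longleftrightarrow> (\<forall>t. ((\<lambda>s. fst (z s)) has_real_derivative snd (z t)) (at t) \<and>
      ((\<lambda>s. snd (z s)) has_real_derivative - U' (fst (z t))) (at t))"

definition regular_energy :: "real \<Rightarrow> bool" where
  "regular_energy E \<longleftrightarrow> (\<forall>w. energy w = E \<longrightarrow> U' (fst w) \<noteq> 0 \<or> snd w \<noteq> 0)"

lemma U'_cont: "isCont U' q"
  using U'_deriv DERIV_isCont by blast

lemma solution_fst_deriv: "solution z \<Longrightarrow> ((\<lambda>s. fst (z s)) has_real_derivative snd (z t)) (at t)"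
  unfolding solution_def by blast

lemma solution_snd_deriv:
  "solution z \<Longrightarrow> ((\<lambda>s. snd (z s)) has_real_derivative - U' (fst (z t))) (at t)"
  unfolding solution_def by blast

lemma solution_fst_cont: "solution z \<Longrightarrow> isCont (\<lambda>s. fst (z s)) t"
  using solution_fst_deriv DERIV_isCont by blast

lemma solution_snd_cont: "solution z \<Longrightarrow> isCont (\<lambda>s. snd (z s)) t"
  using solution_snd_deriv DERIV_isCont by blast

lemma solution_cont:
  assumes "solution z"
  shows "isCont z t"
proof -
  have "isCont (\<lambda>s. (fst (z s), snd (z s))) t"
    by (intro continuous_Pair solution_fst_cont solution_snd_cont assms)
  then show ?thesis by simp
qed

lemma solution_continuous_on: "solution z \<Longrightarrow> continuous_on S z"
  by (simp add: continuous_at_imp_continuous_on solution_cont)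

lemma solution_shift:
  assumes "solution z"
  shows "solution (\<lambda>t. z (t + c))"
  unfolding solution_def
proof (intro allI conjI)
  fix t
  show "((\<lambda>s. fst (z (s + c))) has_real_derivative snd (z (t + c))) (at t)"
    using solution_fst_deriv[OF assms, of "t + c"] by (simp add: DERIV_shift)
  show "((\<lambda>s. snd (z (s + c))) has_real_derivative - U' (fst (z (t + c)))) (at t)"
    using solution_snd_deriv[OF assms, of "t + c"] by (simp add: DERIV_shift)
qed

lemma energy_conserved:
  assumes sol: "solution z"
  shows "energy (z t) = energy (z s)"
proof -
  have "((\<lambda>s. energy (z s)) has_real_derivative 0) (at r)" for r
  proof -
    have "((\<lambda>s. energy (z s)) has_real_derivative
        snd (z r) * - U' (fst (z r)) + U' (fst (z r)) * snd (z r)) (at r)"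
      unfolding energy_def
      by (auto intro!: derivative_eq_intros DERIV_chain2[OF U_deriv]
          solution_fst_deriv[OF sol] solution_snd_deriv[OF sol])
    then show ?thesis by simp
  qed
  then show ?thesis using DERIV_isconst_all by blast
qed

lemma U'_lipschitz_on_bounded:
  obtains L where "L \<ge> 0" "\<And>x y. \<bar>x\<bar> \<le> M \<Longrightarrow> \<bar>y\<bar> \<le> M \<Longrightarrow> \<bar>U' x - U' y\<bar> \<le> L * \<bar>x - y\<bar>"
proof -
  have "continuous_on {-\<bar>M\<bar>..\<bar>M\<bar>} (\<lambda>x. \<bar>U'' x\<bar>)"
    by (intro continuous_at_imp_continuous_on ballI isCont_rabs U''_cont)
  then obtain L where L: "\<And>c. c \<in> {-\<bar>M\<bar>..\<bar>M\<bar>} \<Longrightarrow> \<bar>U'' c\<bar> \<le> L"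
    using continuous_attains_sup[of "{-\<bar>M\<bar>..\<bar>M\<bar>}" "\<lambda>x. \<bar>U'' x\<bar>"] by force
  have lip: "\<bar>U' x - U' y\<bar> \<le> L * \<bar>x - y\<bar>" if "\<bar>x\<bar> \<le> M" "\<bar>y\<bar> \<le> M" "x < y" for x y
  proof -
    obtain c where c: "x < c" "c < y" "U' y - U' x = (y - x) * U'' c"
      using MVT2[of x y U' U''] U'_deriv \<open>x < y\<close> by blast
    have "c \<in> {-\<bar>M\<bar>..\<bar>M\<bar>}" using c that by auto
    then have "\<bar>U'' c\<bar> \<le> L" by (rule L)
    moreover have "\<bar>U' x - U' y\<bar> = \<bar>(y - x) * U'' c\<bar>"
      using c(3) by (metis abs_minus_commute)
    ultimately show ?thesis using \<open>x < y\<close> by (simp add: abs_mult mult_right_mono)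
  qed
  have "\<bar>U' x - U' y\<bar> \<le> L * \<bar>x - y\<bar>" if "\<bar>x\<bar> \<le> M" "\<bar>y\<bar> \<le> M" for x y
    using lip[of x y] lip[of y x] that by (cases x y rule: linorder_cases) (auto simp: abs_minus_commute)
  moreover have "L \<ge> 0" using L[of 0] by auto
  ultimately show ?thesis using that by blast
qed

text \<open>Gronwall's argument for the squared distance of two solutions.\<close>

lemma solution_unique:
  assumes sol1: "solution z1" and sol2: "solution z2" and "z1 s = z2 s"
  shows "z1 t = z2 t"
proof -
  let ?I = "{min s t..max s t}"
  have "continuous_on ?I (\<lambda>r. \<bar>fst (z1 r)\<bar> + \<bar>fst (z2 r)\<bar>)"
    by (intro continuous_at_imp_continuous_on ballI continuous_intros
        solution_fst_cont[OF sol1] solution_fst_cont[OF sol2])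
  then obtain M where M: "\<And>r. r \<in> ?I \<Longrightarrow> \<bar>fst (z1 r)\<bar> + \<bar>fst (z2 r)\<bar> \<le> M"
    using continuous_attains_sup[of ?I] by force
  obtain L where "L \<ge> 0" and L: "\<And>x y. \<bar>x\<bar> \<le> M \<Longrightarrow> \<bar>y\<bar> \<le> M \<Longrightarrow> \<bar>U' x - U' y\<bar> \<le> L * \<bar>x - y\<bar>"
    using U'_lipschitz_on_bounded by blast
  define a where "a r = fst (z1 r) - fst (z2 r)" for r
  define b where "b r = snd (z1 r) - snd (z2 r)" for r
  define e where "e r = U' (fst (z2 r)) - U' (fst (z1 r))" for r
  define u where "u r = (a r)\<^sup>2 + (b r)\<^sup>2" for r
  have "u t = 0"
  proof (rule vanishes_if_abs_deriv_le_multiple[where u = u and s = s and t = t and K = "1 + L"])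
    show "(u has_real_derivative 2 * a r * b r + 2 * b r * e r) (at r)" for r
      unfolding u_def a_def b_def e_def
      by (auto intro!: derivative_eq_intros solution_fst_deriv[OF sol1] solution_fst_deriv[OF sol2]
          solution_snd_deriv[OF sol1] solution_snd_deriv[OF sol2] simp: algebra_simps)
    show "\<bar>2 * a r * b r + 2 * b r * e r\<bar> \<le> (1 + L) * u r"
      if "min s t \<le> r" "r \<le> max s t" for r
      unfolding u_def
    proof (rule abs_cross_terms_le[OF _ \<open>L \<ge> 0\<close>])
      show "\<bar>e r\<bar> \<le> L * \<bar>a r\<bar>"
        using L[of "fst (z2 r)" "fst (z1 r)"] M[of r] that by (simp add: e_def a_def abs_minus_commute)
    qed
  qed (use \<open>z1 s = z2 s\<close> in \<open>auto simp: u_def a_def b_def\<close>)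
  then show ?thesis by (simp add: u_def a_def b_def prod_eq_iff sum_squares_eq_zero_iff)
qed

lemma U_inj_near_nonstationary:
  assumes nonstat: "\<And>q. \<bar>q - c\<bar> < \<delta> \<Longrightarrow> U' q \<noteq> 0"
  shows "inj_on U {q. \<bar>q - c\<bar> < \<delta>}"
proof -
  have "U x \<noteq> U y" if "\<bar>x - c\<bar> < \<delta>" "\<bar>y - c\<bar> < \<delta>" "x < y" for x y
  proof
    assume "U x = U y"
    obtain q where "x < q" "q < y" "U y - U x = (y - x) * U' q"
      using MVT2[of x y U U'] U_deriv \<open>x < y\<close> by blast
    moreover have "U' q \<noteq> 0" using nonstat \<open>x < q\<close> \<open>q < y\<close> that by fastforce
    ultimately show False using \<open>U x = U y\<close> \<open>x < y\<close> by simp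
  qed
  then show ?thesis by (intro inj_onI) (metis linorder_neqE_linordered_idom mem_Collect_eq)
qed

text \<open>The coordinate \<open>\<phi>\<close> serves as a chart of the energy level near \<open>z t0\<close>: the position where
  the momentum is nonzero, the momentum at turning points.\<close>

lemma solution_covers_level_near_if_coordinate:
  assumes sol: "solution z" and "open N" and "z t0 \<in> N"
    and inj: "inj_on \<phi> (N \<inter> {w. energy w = energy (z t0)})"
    and cont: "\<And>w. isCont \<phi> w" and lip: "\<And>v w. \<bar>\<phi> v - \<phi> w\<bar> \<le> dist v w"
    and der: "((\<lambda>t. \<phi> (z t)) has_real_derivative D) (at t0)" and "D \<noteq> 0"
  shows "\<exists>r>0. \<forall>w. energy w = energy (z t0) \<longrightarrow> dist w (z t0) < r \<longrightarrow> w \<in> range z"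
proof -
  obtain \<epsilon> where "\<epsilon> > 0" and ball_N: "ball (z t0) \<epsilon> \<subseteq> N"
    using \<open>open N\<close> \<open>z t0 \<in> N\<close> open_contains_ball by blast
  obtain \<eta> where "\<eta> > 0" and near: "\<And>t. \<bar>t - t0\<bar> < \<eta> \<Longrightarrow> dist (z t) (z t0) < \<epsilon>"
    using solution_cont[OF sol, of t0] \<open>\<epsilon> > 0\<close> unfolding continuous_at_eps_delta dist_real_def by blast
  obtain a b where "\<bar>a - t0\<bar> < \<eta>" "\<bar>b - t0\<bar> < \<eta>" and ab: "\<phi> (z a) < \<phi> (z t0)" "\<phi> (z t0) < \<phi> (z b)"
    using DERIV_nonzero_crossing[OF der \<open>D \<noteq> 0\<close> \<open>\<eta> > 0\<close>] by blast
  define r where "r = min \<epsilon> (min (\<phi> (z t0) - \<phi> (z a)) (\<phi> (z b) - \<phi> (z t0)))"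
  have "w \<in> range z" if w: "energy w = energy (z t0)" "dist w (z t0) < r" for w
  proof -
    have "\<phi> (z a) \<le> \<phi> w" "\<phi> w \<le> \<phi> (z b)" using lip[of w "z t0"] w(2) by (auto simp: r_def)
    moreover have "isCont (\<lambda>t. \<phi> (z t)) t" for t
      using isCont_o2[OF solution_cont[OF sol] cont] .
    ultimately obtain t where t: "min a b \<le> t" "t \<le> max a b" "\<phi> (z t) = \<phi> w"
      using IVT_between[of "\<lambda>t. \<phi> (z t)"] by blast
    have "\<bar>t - t0\<bar> < \<eta>" using t \<open>\<bar>a - t0\<bar> < \<eta>\<close> \<open>\<bar>b - t0\<bar> < \<eta>\<close> by linarith
    then have "dist (z t) (z t0) < \<epsilon>" by (rule near)
    then have "z t \<in> ball (z t0) \<epsilon>" by (simp add: dist_commute)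
    then have "z t \<in> N" using ball_N by blast
    moreover have "w \<in> N" using ball_N w(2) by (auto simp: r_def dist_commute)
    moreover have "energy (z t) = energy (z t0)" by (rule energy_conserved[OF sol])
    ultimately have "z t = w" using inj_onD[OF inj t(3)] w(1) by auto
    then show ?thesis by blast
  qed
  moreover have "r > 0" using \<open>\<epsilon> > 0\<close> ab by (simp add: r_def)
  ultimately show ?thesis by blast
qed

lemma solution_covers_level_near_if_moving:
  assumes sol: "solution z" and "snd (z t0) \<noteq> 0"
  shows "\<exists>r>0. \<forall>w. energy w = energy (z t0) \<longrightarrow> dist w (z t0) < r \<longrightarrow> w \<in> range z"
proof -
  let ?N = "{w. snd w * snd (z t0) > 0}"
  have inj: "inj_on fst (?N \<inter> {w. energy w = energy (z t0)})"
  proof (rule inj_onI)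
    fix v w assume v: "v \<in> ?N \<inter> {w. energy w = energy (z t0)}" and w: "w \<in> ?N \<inter> {w. energy w = energy (z t0)}"
      and "fst v = fst w"
    then have "(snd v)\<^sup>2 = (snd w)\<^sup>2" by (simp add: energy_def)
    moreover have "snd v * snd w > 0" using v w by (auto simp: zero_less_mult_iff mult_less_0_iff)
    ultimately have "snd v = snd w" by (auto simp: power2_eq_iff)
    then show "v = w" using \<open>fst v = fst w\<close> by (simp add: prod_eq_iff)
  qed
  have "open ?N" by (intro open_Collect_less continuous_intros)
  moreover have "z t0 \<in> ?N" using \<open>snd (z t0) \<noteq> 0\<close> by (metis mem_Collect_eq not_real_square_gt_zero)
  moreover have "isCont fst w" for w :: "real \<times> real" by (intro continuous_intros)
  moreover have "\<bar>fst v - fst w\<bar> \<le> dist v w" for v w :: "real \<times> real"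
    using dist_fst_le[of v w] by (simp add: dist_real_def)
  ultimately show ?thesis
    by (rule solution_covers_level_near_if_coordinate[OF sol _ _ inj _ _ solution_fst_deriv[OF sol] \<open>snd (z t0) \<noteq> 0\<close>])
qed

lemma solution_covers_level_near_if_forced:
  assumes sol: "solution z" and force: "U' (fst (z t0)) \<noteq> 0"
  shows "\<exists>r>0. \<forall>w. energy w = energy (z t0) \<longrightarrow> dist w (z t0) < r \<longrightarrow> w \<in> range z"
proof -
  obtain \<delta> where "\<delta> > 0" and nonstat: "\<And>q. \<bar>q - fst (z t0)\<bar> < \<delta> \<Longrightarrow> U' q \<noteq> 0"
    using continuous_at_avoid[OF U'_cont force] by (metis dist_real_def abs_minus_commute)
  let ?N = "{w. \<bar>fst w - fst (z t0)\<bar> < \<delta>}"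
  have inj: "inj_on snd (?N \<inter> {w. energy w = energy (z t0)})"
  proof (rule inj_onI)
    fix v w assume v: "v \<in> ?N \<inter> {w. energy w = energy (z t0)}" and w: "w \<in> ?N \<inter> {w. energy w = energy (z t0)}"
      and "snd v = snd w"
    then have "U (fst v) = U (fst w)" by (simp add: energy_def)
    then have "fst v = fst w" using inj_onD[OF U_inj_near_nonstationary[OF nonstat]] v w by blast
    then show "v = w" using \<open>snd v = snd w\<close> by (simp add: prod_eq_iff)
  qed
  have "open ?N" by (intro open_Collect_less continuous_intros)
  moreover have "z t0 \<in> ?N" using \<open>\<delta> > 0\<close> by simp
  moreover have "isCont snd w" for w :: "real \<times> real" by (intro continuous_intros)
  moreover have "\<bar>snd v - snd w\<bar> \<le> dist v w" for v w :: "real \<times> real"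
    using dist_snd_le[of v w] by (simp add: dist_real_def)
  moreover have "- U' (fst (z t0)) \<noteq> 0" using force by simp
  ultimately show ?thesis
    by (rule solution_covers_level_near_if_coordinate[OF sol _ _ inj _ _ solution_snd_deriv[OF sol]])
qed

lemma solution_covers_level_near:
  assumes sol: "solution z" and reg: "regular_energy (energy (z t0))"
  shows "\<exists>r>0. \<forall>w. energy w = energy (z t0) \<longrightarrow> dist w (z t0) < r \<longrightarrow> w \<in> range z"
  using reg solution_covers_level_near_if_moving[OF sol] solution_covers_level_near_if_forced[OF sol]
  unfolding regular_energy_def by blast

lemma solution_min_turning_point:
  assumes sol: "solution z" and reg: "regular_energy (energy (z s))"
    and min: "\<And>t. fst (z s) \<le> fst (z t)"
  shows "snd (z s) = 0 \<and> U' (fst (z s)) < 0"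
proof -
  have p0: "snd (z s) = 0"
    using DERIV_local_min[OF solution_fst_deriv[OF sol, of s], of 1] min by auto
  then have "U' (fst (z s)) \<noteq> 0" using reg unfolding regular_energy_def by blast
  moreover have "\<not> U' (fst (z s)) > 0"
  proof
    assume "U' (fst (z s)) > 0"
    then obtain t where "fst (z t) < fst (z s)"
      using decreases_after_critical_point[OF solution_fst_deriv[OF sol] solution_snd_deriv[OF sol] p0]
      by auto
    then show False using min[of t] by simp
  qed
  ultimately show ?thesis using p0 by simp
qed

lemma solution_max_turning_point:
  assumes sol: "solution z" and reg: "regular_energy (energy (z s))"
    and max: "\<And>t. fst (z t) \<le> fst (z s)"
  shows "snd (z s) = 0 \<and> U' (fst (z s)) > 0"
proof -
  have p0: "snd (z s) = 0"
    using DERIV_local_max[OF solution_fst_deriv[OF sol, of s], of 1] max by auto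
  then have "U' (fst (z s)) \<noteq> 0" using reg unfolding regular_energy_def by blast
  moreover have "\<not> U' (fst (z s)) < 0"
  proof
    assume "U' (fst (z s)) < 0"
    moreover have "((\<lambda>t. - snd (z t)) has_real_derivative U' (fst (z s))) (at s)"
      using DERIV_minus[OF solution_snd_deriv[OF sol, of s]] by simp
    ultimately obtain t where "- fst (z t) < - fst (z s)"
      using decreases_after_critical_point[OF DERIV_minus[OF solution_fst_deriv[OF sol]]] p0
      by (metis neg_0_less_iff_less neg_equal_0_iff_equal)
    then show False using max[of t] by simp
  qed
  ultimately show ?thesis using p0 by simp
qed

lemma solution_winds_if_never_at_rest:
  assumes sol: "solution z" and moving: "\<And>t. snd (z t) \<noteq> 0" and "T > 0"
    and "cyl_proj (z T) = cyl_proj (z 0)"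
  obtains k :: int where "k \<noteq> 0" "fst (z T) = fst (z 0) + 2 * pi * of_int k"
proof -
  obtain c where "fst (z T) - fst (z 0) = (T - 0) * snd (z c)"
    using MVT2[of 0 T "\<lambda>t. fst (z t)" "\<lambda>t. snd (z t)"] solution_fst_deriv[OF sol] \<open>T > 0\<close> by auto
  then have "fst (z T) \<noteq> fst (z 0)" using moving[of c] \<open>T > 0\<close> by auto
  moreover obtain k :: int where "fst (z T) = fst (z 0) + 2 * pi * of_int k"
    using \<open>cyl_proj (z T) = cyl_proj (z 0)\<close> by (auto simp: cyl_proj_eq_iff)
  ultimately show ?thesis using that by fastforce
qed

lemma periodic_solution_covers_component:
  assumes sol: "solution z" and "T > 0" and per: "\<And>t. z (t + T) = z t"
    and reg: "regular_energy E" and C: "C \<in> components {w. energy w = E}" and "z 0 \<in> C"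
  shows "C \<subseteq> range z"
proof (rule connected_subset_if_closed_and_locally_absorbing)
  have "compact (range z)"
    unfolding periodic_range[where f = z, OF \<open>T > 0\<close> per]
    by (intro compact_continuous_image solution_continuous_on[OF sol] compact_Icc)
  then show "closed (range z)" by (rule compact_imp_closed)
  have level: "energy w = E" if "w \<in> C" for w using in_components_subset[OF C] that by blast
  show "\<exists>e>0. \<forall>y\<in>C. dist y x < e \<longrightarrow> y \<in> range z" if "x \<in> C \<inter> range z" for x
  proof -
    from that obtain t0 where "x = z t0" by blast
    with that have "z t0 \<in> C" by simp
    with \<open>x = z t0\<close> show ?thesis using solution_covers_level_near[OF sol, of t0] reg level by metis
  qed
qed (use C \<open>z 0 \<in> C\<close> in \<open>auto intro: in_components_connected\<close>)

lemma U'_periodic: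
  assumes per: "\<And>q. U (q + 2 * pi) = U q"
  shows "U' (q + 2 * pi) = U' q"
proof -
  have "((\<lambda>q. U (q + 2 * pi)) has_real_derivative U' (q + 2 * pi)) (at q)"
    using DERIV_shift U_deriv by blast
  then have "(U has_real_derivative U' (q + 2 * pi)) (at q)" using per by simp
  then show ?thesis by (rule DERIV_unique[OF _ U_deriv])
qed

lemma energy_cyl_proj_invariant:
  assumes per: "\<And>q. U (q + 2 * pi) = U q" and "cyl_proj v = cyl_proj w"
  shows "energy v = energy w"
proof -
  obtain k :: int where "fst v = fst w + 2 * pi * of_int k" "snd v = snd w"
    using \<open>cyl_proj v = cyl_proj w\<close> by (auto simp: cyl_proj_eq_iff)
  then show ?thesis by (simp add: energy_def periodic_2pi_multiple[where f = U, OF per])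
qed

lemma solution_cyl_unique:
  assumes per: "\<And>q. U (q + 2 * pi) = U q"
    and sol1: "solution z1" and sol2: "solution z2" and "cyl_proj (z1 s) = cyl_proj (z2 s)"
  shows "cyl_proj (z1 t) = cyl_proj (z2 t)"
proof -
  obtain k :: int where k: "fst (z1 s) = fst (z2 s) + 2 * pi * of_int k" "snd (z1 s) = snd (z2 s)"
    using \<open>cyl_proj (z1 s) = cyl_proj (z2 s)\<close> by (auto simp: cyl_proj_eq_iff)
  define z3 where "z3 r = (fst (z2 r) + 2 * pi * of_int k, snd (z2 r))" for r
  have "solution z3"
    unfolding solution_def
  proof (intro allI conjI)
    fix r
    show "((\<lambda>s. fst (z3 s)) has_real_derivative snd (z3 r)) (at r)"
      using DERIV_add[OF solution_fst_deriv[OF sol2] DERIV_const] by (simp add: z3_def)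
    show "((\<lambda>s. snd (z3 s)) has_real_derivative - U' (fst (z3 r))) (at r)"
      using solution_snd_deriv[OF sol2] by (simp add: z3_def periodic_2pi_multiple[where f = U', OF U'_periodic[OF per]])
  qed
  moreover have "z1 s = z3 s" using k by (simp add: z3_def prod_eq_iff)
  ultimately have "z1 t = z3 t" using solution_unique[OF sol1] by blast
  then show ?thesis by (simp add: z3_def cyl_proj_shift)
qed

lemma solution_covers_cylinder_level_near:
  assumes sol: "solution z" and U_per: "\<And>q. U (q + 2 * pi) = U q"
    and reg: "regular_energy (energy (z t0))"
  shows "\<exists>\<delta>>0. \<forall>v. energy v = energy (z t0) \<longrightarrow> dist (cyl_proj v) (cyl_proj (z t0)) < \<delta> \<longrightarrow>
           cyl_proj v \<in> cyl_proj ` range z"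
proof -
  obtain r where "r > 0"
    and r: "\<And>w. energy w = energy (z t0) \<Longrightarrow> dist w (z t0) < r \<Longrightarrow> w \<in> range z"
    using solution_covers_level_near[OF sol reg] by blast
  obtain \<delta> where "\<delta> > 0" and lift: "\<And>v w. dist (cyl_proj v) (cyl_proj w) < \<delta> \<Longrightarrow>
      \<exists>k::int. dist (fst v + 2 * pi * of_int k, snd v) w < r"
    using cyl_proj_locally_liftable[OF \<open>r > 0\<close>] by blast
  have "cyl_proj v \<in> cyl_proj ` range z"
    if v: "energy v = energy (z t0)" "dist (cyl_proj v) (cyl_proj (z t0)) < \<delta>" for v
  proof -
    obtain k :: int where "dist (fst v + 2 * pi * of_int k, snd v) (z t0) < r"
      using lift v(2) by blast
    moreover have "energy (fst v + 2 * pi * of_int k, snd v) = energy (z t0)"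
      using energy_cyl_proj_invariant[OF U_per cyl_proj_shift[of "fst v" k "snd v"]] v(1) by simp
    ultimately have "(fst v + 2 * pi * of_int k, snd v) \<in> range z" using r by blast
    then obtain t where "z t = (fst v + 2 * pi * of_int k, snd v)" by (metis rangeE)
    then have "cyl_proj (z t) = cyl_proj v" by (simp add: cyl_proj_shift)
    then show ?thesis by (metis rangeI image_eqI)
  qed
  then show ?thesis using \<open>\<delta> > 0\<close> by blast
qed

lemma periodic_solution_covers_cylinder_component:
  assumes sol: "solution z" and "T > 0" and per: "\<And>t. cyl_proj (z (t + T)) = cyl_proj (z t)"
    and U_per: "\<And>q. U (q + 2 * pi) = U q"
    and reg: "regular_energy E" and C: "C \<in> components (cyl_proj ` {w. energy w = E})"
    and "cyl_proj (z 0) \<in> C"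
  shows "C \<subseteq> cyl_proj ` range z"
proof (rule connected_subset_if_closed_and_locally_absorbing)
  have "(cyl_proj \<circ> z) (t + T) = (cyl_proj \<circ> z) t" for t using per by simp
  then have "range (cyl_proj \<circ> z) = (cyl_proj \<circ> z) ` {0..T}" by (rule periodic_range[OF \<open>T > 0\<close>])
  then have "cyl_proj ` range z = (cyl_proj \<circ> z) ` {0..T}" by (simp add: image_comp)
  moreover have "compact ((cyl_proj \<circ> z) ` {0..T})"
    by (intro compact_continuous_image continuous_on_compose solution_continuous_on[OF sol]
        continuous_on_cyl_proj compact_Icc)
  ultimately show "closed (cyl_proj ` range z)" by (simp add: compact_imp_closed)
  have level: "\<exists>v. y = cyl_proj v \<and> energy v = E" if "y \<in> C" for y
    using in_components_subset[OF C] that by blast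
  show "\<exists>\<delta>>0. \<forall>y\<in>C. dist y x < \<delta> \<longrightarrow> y \<in> cyl_proj ` range z"
    if xC: "x \<in> C \<inter> cyl_proj ` range z" for x
  proof -
    from xC obtain t0 where x: "x = cyl_proj (z t0)" by blast
    obtain v where v: "x = cyl_proj v" "energy v = E" using level xC by blast
    then have E: "energy (z t0) = E" using energy_cyl_proj_invariant[OF U_per] x by metis
    obtain \<delta> where "\<delta> > 0" and near: "\<And>v. energy v = E \<Longrightarrow> dist (cyl_proj v) x < \<delta> \<Longrightarrow>
        cyl_proj v \<in> cyl_proj ` range z"
      using solution_covers_cylinder_level_near[OF sol U_per, of t0] reg E x by auto
    show ?thesis using \<open>\<delta> > 0\<close> near level by metis
  qed
qed (use C \<open>cyl_proj (z 0) \<in> C\<close> in \<open>auto intro: in_components_connected\<close>)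

end

section \<open>Collisions and the flat torus\<close>

lemma collision_nu_iff_cos_eq_0: "collision_nu n \<longleftrightarrow> cos n = 0"
proof
  assume "collision_nu n"
  then obtain k :: int where "n = pi / 2 + 2 * of_int k * pi \<or> n = - pi / 2 + 2 * of_int k * pi"
    by (auto simp: collision_nu_def)
  then have "n = of_int (2 * k) * pi + pi / 2 \<or> n = of_int (2 * k - 1) * pi + pi / 2"
    by (auto simp: algebra_simps)
  then show "cos n = 0" unfolding cos_zero_iff_int2 by blast
next
  assume "cos n = 0"
  then obtain j :: int where j: "n = of_int j * pi + pi / 2" by (auto simp: cos_zero_iff_int2)
  have "j = 2 * (j div 2) \<or> j = 2 * (j div 2) + 1" by presburger
  then obtain k :: int where "j = 2 * k \<or> j = 2 * k + 1" by blast
  then have "n = pi / 2 + 2 * of_int k * pi \<or> n = - pi / 2 + 2 * of_int (k + 1) * pi"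
    using j by (auto simp: algebra_simps)
  then show "collision_nu n" unfolding collision_nu_def by blast
qed

lemma cos_int_pi_plus_minus_half_pi:
  "cos (of_int j * pi + pi / 2) = 0" "cos (of_int j * pi - pi / 2) = 0"
proof -
  show "cos (of_int j * pi + pi / 2) = 0" by (auto simp: cos_zero_iff_int2)
  have "of_int j * pi - pi / 2 = of_int (j - 1) * pi + pi / 2" by (simp add: algebra_simps)
  then show "cos (of_int j * pi - pi / 2) = 0" unfolding cos_zero_iff_int2 by blast
qed

lemma exists_int_pi_multiple_near: "\<exists>j::int. \<bar>x - of_int j * pi\<bar> \<le> pi / 2"
proof -
  define j where "j = \<lfloor>x / pi + 1 / 2\<rfloor>"
  have "of_int j \<le> x / pi + 1 / 2" "x / pi + 1 / 2 < of_int j + 1"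
    unfolding j_def by linarith+
  then have "of_int j * pi \<le> (x / pi + 1 / 2) * pi" "(x / pi + 1 / 2) * pi < (of_int j + 1) * pi"
    by (simp_all add: mult_right_mono)
  then have "\<bar>x - of_int j * pi\<bar> \<le> pi / 2" unfolding abs_le_iff by (simp add: algebra_simps)
  then show ?thesis by blast
qed

lemma continuous_cos_nonzero_in_strip:
  fixes f :: "real \<Rightarrow> real"
  assumes cont: "\<And>t. isCont f t" and nz: "\<And>t. cos (f t) \<noteq> 0"
  obtains j :: int where "\<And>t. \<bar>f t - of_int j * pi\<bar> < pi / 2"
proof -
  obtain j :: int where "\<bar>f 0 - of_int j * pi\<bar> \<le> pi / 2" using exists_int_pi_multiple_near by blast
  moreover have "f 0 \<noteq> of_int j * pi + pi / 2" "f 0 \<noteq> of_int j * pi - pi / 2"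
    using nz[of 0] cos_int_pi_plus_minus_half_pi[of j] by auto
  ultimately have start: "f 0 < of_int j * pi + pi / 2" "of_int j * pi - pi / 2 < f 0"
    unfolding abs_le_iff by auto
  have same_side: "sgn (f t - c) = sgn (f 0 - c)" if "cos c = 0" for t c
    by (rule sgn_constant_if_nonzero) (use cont nz that in \<open>auto intro!: continuous_intros\<close>)
  have bounds: "f t < of_int j * pi + pi / 2" "of_int j * pi - pi / 2 < f t" for t
    using same_side[of "of_int j * pi + pi / 2" t] same_side[of "of_int j * pi - pi / 2" t]
      start cos_int_pi_plus_minus_half_pi[of j] by (auto simp: sgn_if split: if_splits)
  have "\<bar>f t - of_int j * pi\<bar> < pi / 2" for t using bounds[of t] unfolding abs_less_iff by linarith
  then show ?thesis by (rule that)
qed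

lemma flat_torus_dist_le: "k \<in> \<int> \<times> \<int> \<Longrightarrow> flat_torus_dist u v \<le> dist u (v + k)"
  unfolding flat_torus_dist_def by (rule cINF_lower) (auto intro: bdd_belowI[of _ 0])

lemma irrational_line_dense_in_flat_torus:
  fixes Tn Tl u v :: real and P :: "real \<times> real"
  assumes "Tn > 0" "Tl > 0" and irr: "Tn / Tl \<notin> \<rat>" and "\<epsilon> > 0"
  obtains \<tau> where "flat_torus_dist ((\<tau> + u) / Tn, (\<tau> + v) / Tl) P < \<epsilon>"
proof -
  define \<alpha> where "\<alpha> = snd P - (fst P * Tn - u + v) / Tl"
  obtain h k :: int where hk: "\<bar>of_int k * (Tn / Tl) - of_int h - \<alpha>\<bar> < \<epsilon>"
    using sequence_of_fractional_parts_is_dense[OF irr \<open>\<epsilon> > 0\<close>] by blast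
  define \<tau> where "\<tau> = fst P * Tn - u + of_int k * Tn"
  define e where "e = of_int k * (Tn / Tl) - of_int h - \<alpha>"
  have "(\<tau> + u) / Tn = fst P + of_int k" using \<open>Tn > 0\<close> by (simp add: \<tau>_def field_simps)
  moreover have "(\<tau> + v) / Tl = snd P + of_int h + e"
    using \<open>Tl > 0\<close> by (simp add: \<tau>_def \<alpha>_def e_def field_simps)
  ultimately have shift: "((\<tau> + u) / Tn, (\<tau> + v) / Tl) = (P + (of_int k, of_int h)) + (0, e)"
    by (simp add: prod_eq_iff)
  have "flat_torus_dist ((\<tau> + u) / Tn, (\<tau> + v) / Tl) P
      \<le> dist ((\<tau> + u) / Tn, (\<tau> + v) / Tl) (P + (of_int k, of_int h))"
    by (rule flat_torus_dist_le) auto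
  also have "\<dots> = \<bar>e\<bar>" unfolding shift by (simp add: dist_norm)
  also have "\<dots> < \<epsilon>" using hk by (simp add: e_def)
  finally show ?thesis by (rule that)
qed

section \<open>The regularized two-center problem\<close>

definition Ulam :: "real \<Rightarrow> real \<Rightarrow> real \<Rightarrow> real \<Rightarrow> real \<Rightarrow> real" where
  "Ulam d m1 m2 h l = - d * (m1 + m2) * cosh l - h * d\<^sup>2 * (cosh l)\<^sup>2"

definition Ulam' :: "real \<Rightarrow> real \<Rightarrow> real \<Rightarrow> real \<Rightarrow> real \<Rightarrow> real" where
  "Ulam' d m1 m2 h l = - d * (m1 + m2) * sinh l - 2 * h * d\<^sup>2 * sinh l * cosh l"

definition Ulam'' :: "real \<Rightarrow> real \<Rightarrow> real \<Rightarrow> real \<Rightarrow> real \<Rightarrow> real" where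
  "Ulam'' d m1 m2 h l = - d * (m1 + m2) * cosh l - 2 * h * d\<^sup>2 * ((cosh l)\<^sup>2 + (sinh l)\<^sup>2)"

definition Unu :: "real \<Rightarrow> real \<Rightarrow> real \<Rightarrow> real \<Rightarrow> real \<Rightarrow> real" where
  "Unu d m1 m2 h n = d * (m1 - m2) * sin n + h * d\<^sup>2 * (sin n)\<^sup>2"

definition Unu' :: "real \<Rightarrow> real \<Rightarrow> real \<Rightarrow> real \<Rightarrow> real \<Rightarrow> real" where
  "Unu' d m1 m2 h n = d * (m1 - m2) * cos n + 2 * h * d\<^sup>2 * sin n * cos n"

definition Unu'' :: "real \<Rightarrow> real \<Rightarrow> real \<Rightarrow> real \<Rightarrow> real \<Rightarrow> real" where
  "Unu'' d m1 m2 h n = - d * (m1 - m2) * sin n + 2 * h * d\<^sup>2 * ((cos n)\<^sup>2 - (sin n)\<^sup>2)"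

interpretation lam: mechanical_system "Ulam d m1 m2 h" "Ulam' d m1 m2 h" "Ulam'' d m1 m2 h"
  for d m1 m2 h
proof
  show "(Ulam d m1 m2 h has_real_derivative Ulam' d m1 m2 h l) (at l)" for l
    unfolding Ulam_def Ulam'_def by (auto intro!: derivative_eq_intros simp: power2_eq_square algebra_simps)
  show "(Ulam' d m1 m2 h has_real_derivative Ulam'' d m1 m2 h l) (at l)" for l
    unfolding Ulam'_def Ulam''_def by (auto intro!: derivative_eq_intros simp: power2_eq_square algebra_simps)
  show "isCont (Ulam'' d m1 m2 h) l" for l
    unfolding Ulam''_def by (intro continuous_intros)
qed

interpretation nu: mechanical_system "Unu d m1 m2 h" "Unu' d m1 m2 h" "Unu'' d m1 m2 h"
  for d m1 m2 h
proof
  show "(Unu d m1 m2 h has_real_derivative Unu' d m1 m2 h n) (at n)" for n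
    unfolding Unu_def Unu'_def by (auto intro!: derivative_eq_intros simp: power2_eq_square algebra_simps)
  show "(Unu' d m1 m2 h has_real_derivative Unu'' d m1 m2 h n) (at n)" for n
    unfolding Unu'_def Unu''_def by (auto intro!: derivative_eq_intros simp: power2_eq_square algebra_simps)
  show "isCont (Unu'' d m1 m2 h) n" for n
    unfolding Unu''_def by (intro continuous_intros)
qed

lemma Hlam_eq: "Hlam d m1 m2 h l p = p\<^sup>2 / 2 + Ulam d m1 m2 h l"
  by (simp add: Hlam_def Ulam_def)

lemma Hnu_eq: "Hnu d m1 m2 h n p = p\<^sup>2 / 2 + Unu d m1 m2 h n"
  by (simp add: Hnu_def Unu_def)

lemma deriv_kinetic: "deriv (\<lambda>p. p\<^sup>2 / 2 + c) p = (p::real)"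
  by (rule DERIV_imp_deriv) (auto intro!: derivative_eq_intros)

lemma deriv_Hlam_position: "deriv (\<lambda>q. p\<^sup>2 / 2 + Ulam d m1 m2 h q) q = Ulam' d m1 m2 h q"
  by (rule DERIV_imp_deriv) (auto intro!: derivative_eq_intros lam.U_deriv)

lemma deriv_Hnu_position: "deriv (\<lambda>q. p\<^sup>2 / 2 + Unu d m1 m2 h q) q = Unu' d m1 m2 h q"
  by (rule DERIV_imp_deriv) (auto intro!: derivative_eq_intros nu.U_deriv)

lemma hamiltonian_solution_Hlam_iff:
  "hamiltonian_solution (Hlam d m1 m2 h) z \<longleftrightarrow> lam.solution d m1 m2 h z"
  unfolding hamiltonian_solution_def lam.solution_def Hlam_eq deriv_kinetic deriv_Hlam_position ..

lemma hamiltonian_solution_Hnu_iff: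
  "hamiltonian_solution (Hnu d m1 m2 h) z \<longleftrightarrow> nu.solution d m1 m2 h z"
  unfolding hamiltonian_solution_def nu.solution_def Hnu_eq deriv_kinetic deriv_Hnu_position ..

lemma regular_value_Hlam_iff:
  "regular_value (Hlam d m1 m2 h) E \<longleftrightarrow> lam.regular_energy d m1 m2 h E"
  unfolding regular_value_def lam.regular_energy_def lam.energy_def Hlam_eq deriv_kinetic
    deriv_Hlam_position by auto

lemma regular_value_Hnu_iff:
  "regular_value (Hnu d m1 m2 h) E \<longleftrightarrow> nu.regular_energy d m1 m2 h E"
  unfolding regular_value_def nu.regular_energy_def nu.energy_def Hnu_eq deriv_kinetic
    deriv_Hnu_position by auto

lemma level_Hlam_eq: "{(l, p). Hlam d m1 m2 h l p = E} = {w. lam.energy d m1 m2 h w = E}"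
  by (auto simp: lam.energy_def Hlam_eq)

lemma level_Hnu_eq: "{(n, p). Hnu d m1 m2 h n p = E} = {w. nu.energy d m1 m2 h w = E}"
  by (auto simp: nu.energy_def Hnu_eq)

lemma Unu_periodic: "Unu d m1 m2 h (n + 2 * pi) = Unu d m1 m2 h n"
  by (simp add: Unu_def)

lemma Ulam_turning_point_bounds:
  assumes "d > 0" and "h < 0" and "l \<noteq> 0" and turning: "sinh l * Ulam' d m1 m2 h l < 0"
  shows "- Ulam d m1 m2 h l > d * (m1 + m2) + h * d\<^sup>2 \<and> d * (m1 + m2) > - 2 * h * d\<^sup>2"
proof -
  define a where "a = d * (m1 + m2)"
  define b where "b = - h * d\<^sup>2"
  define c where "c = cosh l"
  have "b > 0" using \<open>d > 0\<close> \<open>h < 0\<close> by (simp add: b_def mult_neg_pos)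
  have "cosh l \<noteq> 1" using cosh_real_one_iff[of l] \<open>l \<noteq> 0\<close> by simp
  then have "c > 1" using cosh_real_ge_1[of l] by (simp add: c_def less_le)
  have "sinh l * Ulam' d m1 m2 h l = (sinh l)\<^sup>2 * (2 * b * c - a)"
    by (simp add: Ulam'_def a_def b_def c_def power2_eq_square algebra_simps)
  moreover have "(sinh l)\<^sup>2 > 0" using \<open>l \<noteq> 0\<close> by simp
  ultimately have "2 * b * c < a" using turning by (simp add: mult_less_0_iff)
  moreover have "b * (c + 1) < b * (2 * c)" using \<open>b > 0\<close> \<open>c > 1\<close> by simp
  ultimately have "(c - 1) * (a - b * (c + 1)) > 0" using \<open>c > 1\<close> by simp
  moreover have "- Ulam d m1 m2 h l = a * c - b * c\<^sup>2" by (simp add: Ulam_def a_def b_def c_def)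
  ultimately have "- Ulam d m1 m2 h l > a - b" by (simp add: algebra_simps power2_eq_square)
  moreover have "a > 2 * b" using \<open>2 * b * c < a\<close> \<open>b > 0\<close> \<open>c > 1\<close> by (smt (verit) mult_less_cancel_left2)
  ultimately show ?thesis by (simp add: a_def b_def)
qed

lemma Unu_le_if_masses_dominate:
  assumes "d > 0" and "m1 > 0" and "m2 > 0" and "h < 0" and dominate: "d * (m1 + m2) > - 2 * h * d\<^sup>2"
  shows "Unu d m1 m2 h n \<le> d * (m1 + m2) + h * d\<^sup>2"
proof -
  define a where "a = d * (m1 + m2)"
  define b where "b = - h * d\<^sup>2"
  define s where "s = sin n"
  have "\<bar>s\<bar> \<le> 1" by (simp add: s_def)
  have "d * (m1 - m2) * s \<le> a * \<bar>s\<bar>"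
  proof -
    have "d * (m1 - m2) * s \<le> \<bar>d * (m1 - m2)\<bar> * \<bar>s\<bar>" by (metis abs_ge_self abs_mult)
    moreover have "\<bar>d * (m1 - m2)\<bar> \<le> a" using assms(1-3) by (simp add: a_def abs_mult)
    ultimately show ?thesis by (meson abs_ge_zero mult_right_mono order_trans)
  qed
  moreover have "(1 - \<bar>s\<bar>) * (a - b * (1 + \<bar>s\<bar>)) \<ge> 0"
  proof -
    have "b * (1 + \<bar>s\<bar>) \<le> b * 2"
      using \<open>\<bar>s\<bar> \<le> 1\<close> \<open>d > 0\<close> \<open>h < 0\<close> by (intro mult_left_mono) (auto simp: b_def mult_neg_pos less_imp_le)
    then show ?thesis using dominate \<open>\<bar>s\<bar> \<le> 1\<close> by (simp add: a_def b_def)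
  qed
  ultimately show ?thesis
    by (simp add: Unu_def a_def b_def s_def[symmetric] algebra_simps power2_eq_square)
qed

lemma Unu'_int_pi_shift:
  "Unu' d m1 m2 h (of_int j * pi + \<psi>) =
     cos \<psi> * (cos (of_int j * pi) * (d * (m1 - m2)) + 2 * h * d\<^sup>2 * sin \<psi>)"
proof -
  let ?\<sigma> = "cos (of_int j * pi)"
  have sin0: "sin (of_int j * pi) = 0" by (simp add: sin_zero_iff_int2)
  then have "?\<sigma> * ?\<sigma> = 1" using sin_cos_squared_add[of "of_int j * pi"] by (simp add: power2_eq_square)
  have "Unu' d m1 m2 h (of_int j * pi + \<psi>) =
      cos \<psi> * (?\<sigma> * (d * (m1 - m2)) + 2 * h * d\<^sup>2 * (?\<sigma> * ?\<sigma>) * sin \<psi>)"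
    by (simp add: Unu'_def sin_add cos_add sin0 algebra_simps)
  then show ?thesis using \<open>?\<sigma> * ?\<sigma> = 1\<close> by simp
qed

lemma Unu'_stays_nonpos_in_strip:
  assumes "h < 0" and "\<bar>\<psi>1\<bar> < pi / 2" and "\<bar>\<psi>2\<bar> < pi / 2" and "\<psi>1 \<le> \<psi>2"
    and neg: "Unu' d m1 m2 h (of_int j * pi + \<psi>1) < 0"
  shows "Unu' d m1 m2 h (of_int j * pi + \<psi>2) \<le> 0"
proof -
  define A where "A = cos (of_int j * pi) * (d * (m1 - m2))"
  have "cos \<psi>1 > 0" "cos \<psi>2 > 0" using assms(2,3) unfolding abs_less_iff by (auto intro!: cos_gt_zero_pi)
  then have "A + 2 * h * d\<^sup>2 * sin \<psi>1 < 0"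
    using neg unfolding Unu'_int_pi_shift A_def by (simp add: mult_less_0_iff)
  moreover have "2 * h * d\<^sup>2 * sin \<psi>2 \<le> 2 * h * d\<^sup>2 * sin \<psi>1"
  proof (rule mult_left_mono_neg)
    show "sin \<psi>1 \<le> sin \<psi>2" using assms(2-4) unfolding abs_less_iff by (simp add: sin_mono_le_eq)
    show "2 * h * d\<^sup>2 \<le> 0" using \<open>h < 0\<close> by (simp add: mult_nonpos_nonneg)
  qed
  ultimately have "A + 2 * h * d\<^sup>2 * sin \<psi>2 < 0" by linarith
  then show ?thesis using \<open>cos \<psi>2 > 0\<close> unfolding Unu'_int_pi_shift A_def by (simp add: mult_le_0_iff)
qed

lemma lam_orbit_avoiding_zero_bounds:
  assumes "d > 0" and "h < 0" and sol: "lam.solution d m1 m2 h x"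
    and "T > 0" and per: "\<And>t. x (t + T) = x t"
    and reg: "lam.regular_energy d m1 m2 h (- g)" and E: "lam.energy d m1 m2 h (x 0) = - g"
    and avoid: "\<And>t. fst (x t) \<noteq> 0"
  shows "g > d * (m1 + m2) + h * d\<^sup>2 \<and> d * (m1 + m2) > - 2 * h * d\<^sup>2"
proof -
  have cont: "isCont (\<lambda>t. fst (x t)) t" for t by (rule lam.solution_fst_cont[OF sol])
  obtain smin smax where extr: "\<And>t. fst (x smin) \<le> fst (x t) \<and> fst (x t) \<le> fst (x smax)"
    using periodic_attains_min_max[OF \<open>T > 0\<close> _ cont] per by metis
  have reg_t: "lam.regular_energy d m1 m2 h (lam.energy d m1 m2 h (x t))" for t
    using reg E lam.energy_conserved[OF sol, of t 0] by simp
  have sgn_eq: "sgn (fst (x t)) = sgn (fst (x 0))" for t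
    by (rule sgn_constant_if_nonzero[OF cont avoid])
  obtain s where s: "snd (x s) = 0" "sinh (fst (x s)) * Ulam' d m1 m2 h (fst (x s)) < 0"
  proof (cases "fst (x 0) > 0")
    case True
    then have "fst (x smin) > 0" using sgn_eq[of smin] by (simp add: sgn_if split: if_splits)
    moreover have "snd (x smin) = 0 \<and> Ulam' d m1 m2 h (fst (x smin)) < 0"
      using lam.solution_min_turning_point[OF sol reg_t] extr by blast
    ultimately show ?thesis using that[of smin] by (simp add: mult_pos_neg)
  next
    case False
    then have "fst (x 0) < 0" using avoid[of 0] by simp
    then have "fst (x smax) < 0" using sgn_eq[of smax] by (simp add: sgn_if split: if_splits)
    moreover have "snd (x smax) = 0 \<and> Ulam' d m1 m2 h (fst (x smax)) > 0"
      using lam.solution_max_turning_point[OF sol reg_t] extr by blast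
    ultimately show ?thesis using that[of smax] by (simp add: mult_neg_pos)
  qed
  have "Ulam d m1 m2 h (fst (x s)) = - g"
    using lam.energy_conserved[OF sol, of s 0] E s(1) by (simp add: lam.energy_def)
  then show ?thesis
    using Ulam_turning_point_bounds[OF \<open>d > 0\<close> \<open>h < 0\<close> avoid[of s] s(2)]
    by simp
qed

lemma nu_component_not_contractible:
  assumes "d > 0" and "m1 > 0" and "m2 > 0" and "h < 0"
    and g_big: "g > d * (m1 + m2) + h * d\<^sup>2" and dominate: "d * (m1 + m2) > - 2 * h * d\<^sup>2"
    and sol: "nu.solution d m1 m2 h y" and "T > 0"
    and per: "\<And>t. cyl_proj (y (t + T)) = cyl_proj (y t)"
    and E: "nu.energy d m1 m2 h (y 0) = g"
    and C: "C \<in> components (cyl_proj ` {w. nu.energy d m1 m2 h w = g})" and "cyl_proj (y 0) \<in> C"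
  shows "\<not> contractible_in C cylinder"
proof -
  have energy: "(snd (y t))\<^sup>2 = 2 * (g - Unu d m1 m2 h (fst (y t)))" for t
    using nu.energy_conserved[OF sol, of t 0] E by (simp add: nu.energy_def field_simps)
  have p_nonzero: "snd (y t) \<noteq> 0" for t
    using energy[of t] Unu_le_if_masses_dominate[OF assms(1-4) dominate, of "fst (y t)"] g_big by auto
  obtain k :: int where "k \<noteq> 0" and winds: "fst (y T) = fst (y 0) + 2 * pi * of_int k"
    using nu.solution_winds_if_never_at_rest[OF sol p_nonzero \<open>T > 0\<close>] per[of 0] by auto
  define \<sigma> where "\<sigma> = sgn (snd (y 0))"
  have sgn_p: "sgn (snd (y t)) = \<sigma>" for t
    unfolding \<sigma>_def by (rule sgn_constant_if_nonzero[OF nu.solution_snd_cont[OF sol] p_nonzero])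
  define \<psi> where "\<psi> w = (w, \<sigma> * sqrt (2 * (g - (d * (m1 - m2) * Im w + h * d\<^sup>2 * (Im w)\<^sup>2))))"
    for w :: complex
  have on_orbit: "cyl_proj (y t) = \<psi> (cis (fst (y t)))" for t
  proof -
    have "snd (y t) = \<sigma> * sqrt ((snd (y t))\<^sup>2)" using sgn_mult_abs[of "snd (y t)"] sgn_p[of t] by simp
    then show ?thesis by (simp add: cyl_proj_def \<psi>_def energy Unu_def)
  qed
  have "\<psi> ` sphere 0 1 \<subseteq> cyl_proj ` range y"
  proof
    fix u assume "u \<in> \<psi> ` sphere 0 1"
    then obtain w where "u = \<psi> w" "cmod w = 1" by auto
    then obtain t where "cis (fst (y t)) = w"
      using cis_surj_if_winding[OF nu.solution_fst_cont[OF sol] winds \<open>k \<noteq> 0\<close>] by blast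
    then show "u \<in> cyl_proj ` range y" using on_orbit[of t] \<open>u = \<psi> w\<close> by (metis image_eqI rangeI)
  qed
  also have "cyl_proj ` range y \<subseteq> C"
  proof (rule components_maximal[OF C])
    show "connected (cyl_proj ` range y)"
      using connected_continuous_image[OF continuous_on_compose[OF nu.solution_continuous_on[OF sol]
          continuous_on_cyl_proj] connected_UNIV] by (simp add: image_comp)
    show "cyl_proj ` range y \<subseteq> cyl_proj ` {w. nu.energy d m1 m2 h w = g}"
      using nu.energy_conserved[OF sol] E by auto
  qed (use \<open>cyl_proj (y 0) \<in> C\<close> in auto)
  finally have "\<psi> ` sphere 0 1 \<subseteq> C" .
  moreover have "continuous_on (sphere 0 1) \<psi>" unfolding \<psi>_def by (intro continuous_intros)
  moreover have "fst ` cylinder \<subseteq> sphere 0 1" by (auto simp: cylinder_def cyl_proj_def)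
  ultimately show ?thesis by (intro not_contractible_in_if_circle_section) (auto simp: \<psi>_def)
qed

lemma nu_orbit_meets_collision:
  assumes "d > 0" and "h < 0" and sol: "nu.solution d m1 m2 h y" and "T > 0"
    and per: "\<And>t. cyl_proj (y (t + T)) = cyl_proj (y t)"
    and reg: "nu.regular_energy d m1 m2 h (nu.energy d m1 m2 h (y 0))"
  shows "\<exists>s. collision_nu (fst (y s))"
proof (rule ccontr)
  assume "\<nexists>s. collision_nu (fst (y s))"
  then have "cos (fst (y t)) \<noteq> 0" for t by (auto simp: collision_nu_iff_cos_eq_0)
  then obtain j :: int where strip: "\<And>t. \<bar>fst (y t) - of_int j * pi\<bar> < pi / 2"
    using continuous_cos_nonzero_in_strip[OF nu.solution_fst_cont[OF sol]] by blast
  have periodic: "fst (y (t + T)) = fst (y t)" for t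
  proof (rule cis_eq_imp_eq_if_close)
    show "cis (fst (y (t + T))) = cis (fst (y t))" using per[of t] by (simp add: cyl_proj_def)
    show "\<bar>fst (y (t + T)) - fst (y t)\<bar> < 2 * pi"
      using strip[of t] strip[of "t + T"] unfolding abs_less_iff by linarith
  qed
  obtain smin smax where extr: "\<And>t. fst (y smin) \<le> fst (y t) \<and> fst (y t) \<le> fst (y smax)"
    using periodic_attains_min_max[OF \<open>T > 0\<close> periodic nu.solution_fst_cont[OF sol]] by blast
  have reg_t: "nu.regular_energy d m1 m2 h (nu.energy d m1 m2 h (y t))" for t
    using reg nu.energy_conserved[OF sol, of t 0] by simp
  have "Unu' d m1 m2 h (of_int j * pi + (fst (y smin) - of_int j * pi)) < 0"
    using nu.solution_min_turning_point[OF sol reg_t] extr by simp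
  moreover have "fst (y smin) - of_int j * pi \<le> fst (y smax) - of_int j * pi" using extr by simp
  ultimately have "Unu' d m1 m2 h (of_int j * pi + (fst (y smax) - of_int j * pi)) \<le> 0"
    using Unu'_stays_nonpos_in_strip[OF \<open>h < 0\<close> strip strip] by blast
  moreover have "Unu' d m1 m2 h (fst (y smax)) > 0" using nu.solution_max_turning_point[OF sol reg_t] extr by blast
  ultimately show False by simp
qed

lemma lam_energy_on_component:
  assumes "C \<in> components {(l, p). Hlam d m1 m2 h l p = E}" and "w \<in> C"
  shows "lam.energy d m1 m2 h w = E"
  using in_components_subset[OF assms(1)] assms(2) by (auto simp: level_Hlam_eq)

lemma nu_energy_on_component:
  assumes "C \<in> components (cyl_proj ` {(n, p). Hnu d m1 m2 h n p = E})" and "cyl_proj w \<in> C"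
  shows "nu.energy d m1 m2 h w = E"
proof -
  obtain v where "cyl_proj w = cyl_proj v" "nu.energy d m1 m2 h v = E"
    using in_components_subset[OF assms(1)] assms(2) by (auto simp: level_Hnu_eq)
  then show ?thesis using nu.energy_cyl_proj_invariant[OF Unu_periodic] by metis
qed

lemma Hlam_periodic_orbit_covers_component:
  assumes x: "hamiltonian_solution (Hlam d m1 m2 h) x" and per: "minimal_period x T"
    and reg: "regular_value (Hlam d m1 m2 h) E" and C: "C \<in> components {(l, p). Hlam d m1 m2 h l p = E}"
    and "x 0 \<in> C"
  shows "C \<subseteq> range x"
proof (rule lam.periodic_solution_covers_component)
  show "lam.solution d m1 m2 h x" using x by (simp add: hamiltonian_solution_Hlam_iff)
  show "T > 0" "x (t + T) = x t" for t using per by (auto simp: minimal_period_def)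
  show "lam.regular_energy d m1 m2 h E" using reg by (simp add: regular_value_Hlam_iff)
  show "C \<in> components {w. lam.energy d m1 m2 h w = E}" using C by (simp add: level_Hlam_eq)
qed (rule \<open>x 0 \<in> C\<close>)

lemma Hlam_torus_orbit_is_time_shift:
  assumes x: "hamiltonian_solution (Hlam d m1 m2 h) x" and "minimal_period x T"
    and "regular_value (Hlam d m1 m2 h) E" and C: "C \<in> components {(l, p). Hlam d m1 m2 h l p = E}"
    and "x 0 \<in> C" and z: "hamiltonian_solution (Hlam d m1 m2 h) z" and "z 0 \<in> C"
  shows "\<exists>c. \<forall>\<tau>. z \<tau> = x (\<tau> + c)"
proof -
  obtain c where "z 0 = x (0 + c)"
    using Hlam_periodic_orbit_covers_component[OF assms(1-5)] \<open>z 0 \<in> C\<close> by auto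
  moreover have "lam.solution d m1 m2 h z" using z by (simp add: hamiltonian_solution_Hlam_iff)
  moreover have "lam.solution d m1 m2 h (\<lambda>\<tau>. x (\<tau> + c))"
    using x lam.solution_shift by (simp add: hamiltonian_solution_Hlam_iff)
  ultimately have "z \<tau> = x (\<tau> + c)" for \<tau>
    using lam.solution_unique[of d m1 m2 h z "\<lambda>\<tau>. x (\<tau> + c)" 0 \<tau>] by simp
  then show ?thesis by blast
qed

lemma Hnu_periodic_orbit_covers_component:
  assumes y: "hamiltonian_solution (Hnu d m1 m2 h) y" and per: "minimal_period (cyl_proj \<circ> y) T"
    and reg: "regular_value (Hnu d m1 m2 h) E"
    and C: "C \<in> components (cyl_proj ` {(n, p). Hnu d m1 m2 h n p = E})" and "cyl_proj (y 0) \<in> C"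
  shows "C \<subseteq> cyl_proj ` range y"
proof (rule nu.periodic_solution_covers_cylinder_component)
  show "nu.solution d m1 m2 h y" using y by (simp add: hamiltonian_solution_Hnu_iff)
  show "T > 0" "cyl_proj (y (t + T)) = cyl_proj (y t)" for t using per by (auto simp: minimal_period_def)
  show "nu.regular_energy d m1 m2 h E" using reg by (simp add: regular_value_Hnu_iff)
  show "C \<in> components (cyl_proj ` {w. nu.energy d m1 m2 h w = E})" using C by (simp add: level_Hnu_eq)
qed (rule Unu_periodic, rule \<open>cyl_proj (y 0) \<in> C\<close>)

lemma Hnu_torus_orbit_is_time_shift:
  assumes y: "hamiltonian_solution (Hnu d m1 m2 h) y" and "minimal_period (cyl_proj \<circ> y) T"
    and "regular_value (Hnu d m1 m2 h) E"
    and C: "C \<in> components (cyl_proj ` {(n, p). Hnu d m1 m2 h n p = E})"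
    and "cyl_proj (y 0) \<in> C" and z: "hamiltonian_solution (Hnu d m1 m2 h) z" and "cyl_proj (z 0) \<in> C"
  shows "\<exists>c. \<forall>\<tau>. cyl_proj (z \<tau>) = cyl_proj (y (\<tau> + c))"
proof -
  obtain c where "cyl_proj (z 0) = cyl_proj (y (0 + c))"
    using Hnu_periodic_orbit_covers_component[OF assms(1-5)] \<open>cyl_proj (z 0) \<in> C\<close> by auto
  moreover have "nu.solution d m1 m2 h z" using z by (simp add: hamiltonian_solution_Hnu_iff)
  moreover have "nu.solution d m1 m2 h (\<lambda>\<tau>. y (\<tau> + c))"
    using y nu.solution_shift by (simp add: hamiltonian_solution_Hnu_iff)
  ultimately have "cyl_proj (z \<tau>) = cyl_proj (y (\<tau> + c))" for \<tau>
    using nu.solution_cyl_unique[OF Unu_periodic, of d m1 m2 h z "\<lambda>\<tau>. y (\<tau> + c)" 0 \<tau>] by simp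
  then show ?thesis by blast
qed

lemma Hnu_orbit_meets_collision:
  assumes "d > 0" and "h < 0" and y: "hamiltonian_solution (Hnu d m1 m2 h) y"
    and per: "minimal_period (cyl_proj \<circ> y) T" and reg: "regular_value (Hnu d m1 m2 h) E"
    and C: "C \<in> components (cyl_proj ` {(n, p). Hnu d m1 m2 h n p = E})" and "cyl_proj (y 0) \<in> C"
  shows "\<exists>s. collision_nu (fst (y s))"
proof (rule nu_orbit_meets_collision[OF \<open>d > 0\<close> \<open>h < 0\<close>])
  show "nu.solution d m1 m2 h y" using y by (simp add: hamiltonian_solution_Hnu_iff)
  show "T > 0" "cyl_proj (y (t + T)) = cyl_proj (y t)" for t using per by (auto simp: minimal_period_def)
  show "nu.regular_energy d m1 m2 h (nu.energy d m1 m2 h (y 0))"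
    using reg nu_energy_on_component[OF C \<open>cyl_proj (y 0) \<in> C\<close>] by (simp add: regular_value_Hnu_iff)
qed

lemma Hlam_orbit_meets_zero:
  assumes "d > 0" and "m1 > 0" and "m2 > 0" and "h < 0"
    and reg_lam: "regular_value (Hlam d m1 m2 h) (- g)"
    and Cl: "Cl \<in> components {(l, p). Hlam d m1 m2 h l p = - g}"
    and Cn: "Cn \<in> components (cyl_proj ` {(n, p). Hnu d m1 m2 h n p = g})"
    and typeSL: "contractible_in Cn cylinder \<or> (\<not> contractible_in Cn cylinder \<and> (\<exists>p. (0, p) \<in> Cl))"
    and x: "hamiltonian_solution (Hlam d m1 m2 h) x" and "x 0 \<in> Cl" and "minimal_period x Tl"
    and y: "hamiltonian_solution (Hnu d m1 m2 h) y" and "cyl_proj (y 0) \<in> Cn"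
    and "minimal_period (cyl_proj \<circ> y) Tn"
  shows "\<exists>t. fst (x t) = 0"
proof (rule ccontr)
  assume "\<nexists>t. fst (x t) = 0"
  then have avoid: "\<And>t. fst (x t) \<noteq> 0" by blast
  from typeSL show False
  proof
    assume "contractible_in Cn cylinder"
    have bounds: "g > d * (m1 + m2) + h * d\<^sup>2 \<and> d * (m1 + m2) > - 2 * h * d\<^sup>2"
    proof (rule lam_orbit_avoiding_zero_bounds[OF \<open>d > 0\<close> \<open>h < 0\<close> _ _ _ _ _ avoid])
      show "lam.solution d m1 m2 h x" using x by (simp add: hamiltonian_solution_Hlam_iff)
      show "Tl > 0" "x (t + Tl) = x t" for t using \<open>minimal_period x Tl\<close> by (auto simp: minimal_period_def)
      show "lam.regular_energy d m1 m2 h (- g)" using reg_lam by (simp add: regular_value_Hlam_iff)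
      show "lam.energy d m1 m2 h (x 0) = - g" by (rule lam_energy_on_component[OF Cl \<open>x 0 \<in> Cl\<close>])
    qed
    have "\<not> contractible_in Cn cylinder"
    proof (rule nu_component_not_contractible[OF assms(1-4) conjunct1[OF bounds] conjunct2[OF bounds]])
      show "nu.solution d m1 m2 h y" using y by (simp add: hamiltonian_solution_Hnu_iff)
      show "Tn > 0" "cyl_proj (y (t + Tn)) = cyl_proj (y t)" for t
        using \<open>minimal_period (cyl_proj \<circ> y) Tn\<close> by (auto simp: minimal_period_def)
      show "nu.energy d m1 m2 h (y 0) = g" by (rule nu_energy_on_component[OF Cn \<open>cyl_proj (y 0) \<in> Cn\<close>])
      show "Cn \<in> components (cyl_proj ` {w. nu.energy d m1 m2 h w = g})" using Cn by (simp add: level_Hnu_eq)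
    qed (rule \<open>cyl_proj (y 0) \<in> Cn\<close>)
    then show False using \<open>contractible_in Cn cylinder\<close> by blast
  next
    assume "\<not> contractible_in Cn cylinder \<and> (\<exists>p. (0, p) \<in> Cl)"
    then obtain p where "(0, p) \<in> Cl" by blast
    then have "(0, p) \<in> range x"
      using Hlam_periodic_orbit_covers_component[OF x \<open>minimal_period x Tl\<close> reg_lam Cl \<open>x 0 \<in> Cl\<close>] by blast
    then show False using avoid by (metis fst_conv rangeE)
  qed
qed

theorem corollary5:
  fixes d m1 m2 h g Tl Tn :: real
    and Cl :: "(real \<times> real) set" and Cn :: "(complex \<times> real) set"
    and x y gl gn :: "real \<Rightarrow> real \<times> real"
  assumes "d > 0" and "m1 > 0" and "m2 > 0" and "h < 0"
    and "regular_value (Hlam d m1 m2 h) (- g)"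
    and "regular_value (Hnu d m1 m2 h) g"
    and "Cl \<in> components {(l, p). Hlam d m1 m2 h l p = - g}" and "compact Cl"
    and "Cn \<in> components (cyl_proj ` {(n, p). Hnu d m1 m2 h n p = g})" and "compact Cn"
    and typeSL: "contractible_in Cn cylinder \<or>
                 (\<not> contractible_in Cn cylinder \<and> (\<exists>p. (0, p) \<in> Cl))"
    and "hamiltonian_solution (Hlam d m1 m2 h) x" and "x 0 \<in> Cl" and "minimal_period x Tl"
    and "hamiltonian_solution (Hnu d m1 m2 h) y" and "cyl_proj (y 0) \<in> Cn"
    and "minimal_period (cyl_proj \<circ> y) Tn"
    and "hamiltonian_solution (Hlam d m1 m2 h) gl" and "gl 0 \<in> Cl"
    and "hamiltonian_solution (Hnu d m1 m2 h) gn" and "cyl_proj (gn 0) \<in> Cn"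
    and avoid: "\<exists>\<epsilon>>0. \<forall>\<tau> s1 t1 s2 t2.
         x t1 = gl \<tau> \<longrightarrow> cyl_proj (y s1) = cyl_proj (gn \<tau>) \<longrightarrow>
         fst (x t2) = 0 \<longrightarrow> collision_nu (fst (y s2)) \<longrightarrow>
         \<epsilon> \<le> flat_torus_dist (s1 / Tn, t1 / Tl) (s2 / Tn, t2 / Tl)"
  shows "Tn / Tl \<in> \<rat>"
proof (rule ccontr)
  assume irrational: "Tn / Tl \<notin> \<rat>"
  have "Tl > 0" "Tn > 0" using assms(14,17) by (auto simp: minimal_period_def)
  obtain c1 where c1: "\<And>\<tau>. gl \<tau> = x (\<tau> + c1)"
    using Hlam_torus_orbit_is_time_shift[OF assms(12,14,5,7,13,18,19)] by blast
  obtain c2 where c2: "\<And>\<tau>. cyl_proj (gn \<tau>) = cyl_proj (y (\<tau> + c2))"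
    using Hnu_torus_orbit_is_time_shift[OF assms(15,17,6,9,16,20,21)] by blast
  obtain t2 where t2: "fst (x t2) = 0"
    using Hlam_orbit_meets_zero[OF assms(1-5,7,9) typeSL assms(12-17)] by blast
  obtain s2 where s2: "collision_nu (fst (y s2))"
    using Hnu_orbit_meets_collision[OF assms(1,4,15,17,6,9,16)] by blast
  obtain \<epsilon> where "\<epsilon> > 0" and far: "\<And>\<tau> s1 t1.
      x t1 = gl \<tau> \<Longrightarrow> cyl_proj (y s1) = cyl_proj (gn \<tau>) \<Longrightarrow>
      \<epsilon> \<le> flat_torus_dist (s1 / Tn, t1 / Tl) (s2 / Tn, t2 / Tl)"
    using avoid t2 s2 by blast
  obtain \<tau> where "flat_torus_dist ((\<tau> + c2) / Tn, (\<tau> + c1) / Tl) (s2 / Tn, t2 / Tl) < \<epsilon>"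
    by (rule irrational_line_dense_in_flat_torus[OF \<open>Tn > 0\<close> \<open>Tl > 0\<close> irrational \<open>\<epsilon> > 0\<close>])
  then show False using far[of "\<tau> + c1" \<tau> "\<tau> + c2"] c1 c2 by simp
qed

end
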